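(* Let $\mathcal{I}$ be a Borel ideal on $\omega$ with $\mathrm{fin} \subseteq \mathcal{I}$. If $\mathcal{I}$ is uniformly weakly $P^+$, then $\mathcal{I}$ is uniformly weakly Ramsey.
   Context: $\mathrm{fin}$ is the ideal of finite subsets of $\omega$; $\mathcal{I}^+$ denotes subsets of $\omega$ not in $\mathcal{I}$; $A \subseteq_{\mathcal{I}} B$ means $A \setminus B \in \mathcal{I}$. $\mathcal{I}$ is uniformly weakly $P^+$ if there is a Borel function $\Phi$ such that for every $\subseteq$-decreasing sequence $\langle A_n : n\in\omega\rangle$ of $\mathcal{I}$-positive sets, $\Phi(\langle A_n\rangle) \in \mathcal{I}^+$ and $\Phi(\langle A_n\rangle) \subseteq_{\mathcal{I}} A_n$ for every $n$. For $A\subseteq\omega$, $\mathcal{I}|A = \{I \subseteq A : I\in\mathcal{I}\}$ and $(\mathcal{I}|A)^+$ is the family of subsets of $A$ not in $\mathcal{I}$. A coloring is $c : [\omega]^2 \to 2$; it is subadditive if $c(\{m,n\}) \le c(\{m,k\}) + c(\{n,k\})$ for all $m<n<k$. $H$ is 0-homogeneous for $c$ if $c(\{m,n\})=0$ for all distinct $m,n\in H$; $H$ is nowhere 0-homogeneous if every $B \in (\mathcal{I}|H)^+$ contains distinct $m,n$ with $c(\{m,n\})=1$. $\mathcal{I}$ is uniformly weakly Ramsey if there is a Borel $\Phi : [\omega]^\omega \times 2^{[\omega]^2} \to [\omega]^\omega$ such that for every $A \in \mathcal{I}^+$ and every subadditive coloring $c$, $\Phi(A,c) \in (\mathcal{I}|A)^+$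 and $\Phi(A,c)$ is 0-homogeneous or nowhere 0-homogeneous for $c$. *)

theory Defs
  imports "HOL-Analysis.Analysis"
begin

text \<open>Subsets of omega are coded by characteristic functions in the Cantor space
  nat \<Rightarrow> bool (product of discrete bool).\<close>

definition chi :: "nat set \<Rightarrow> (nat \<Rightarrow> bool)" where
  "chi A = (\<lambda>n. n \<in> A)"

definition set_of :: "(nat \<Rightarrow> bool) \<Rightarrow> nat set" where
  "set_of x = {n. x n}"

definition is_ideal :: "nat set set \<Rightarrow> bool" where
  "is_ideal I \<longleftrightarrow> (\<forall>A B. A \<in> I \<longrightarrow> B \<subseteq> A \<longrightarrow> B \<in> I)
                 \<and> (\<forall>A B. A \<in> I \<longrightarrow> B \<in> I \<longrightarrow> A \<union> B \<in> I)
                 \<and> UNIV \<notin> I"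

definition borel_ideal :: "nat set set \<Rightarrow> bool" where
  "borel_ideal I \<longleftrightarrow> is_ideal I \<and> chi ` I \<in> sets (borel :: (nat \<Rightarrow> bool) measure)"

definition fin_in :: "nat set set \<Rightarrow> bool" where
  "fin_in I \<longleftrightarrow> (\<forall>A. finite A \<longrightarrow> A \<in> I)"

definition subset_mod :: "nat set set \<Rightarrow> nat set \<Rightarrow> nat set \<Rightarrow> bool" where
  "subset_mod I A B \<longleftrightarrow> A - B \<in> I"

definition uniformly_weakly_Pplus :: "nat set set \<Rightarrow> bool" where
  "uniformly_weakly_Pplus I \<longleftrightarrow>
     (\<exists>\<Phi> :: (nat \<Rightarrow> nat \<Rightarrow> bool) \<Rightarrow> (nat \<Rightarrow> bool).
        \<Phi> \<in> borel_measurable borel \<and>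
        (\<forall>A :: nat \<Rightarrow> nat set. (\<forall>n. A n \<notin> I) \<and> (\<forall>n. A (Suc n) \<subseteq> A n) \<longrightarrow>
            set_of (\<Phi> (\<lambda>n. chi (A n))) \<notin> I \<and>
            (\<forall>n. subset_mod I (set_of (\<Phi> (\<lambda>n. chi (A n)))) (A n))))"

text \<open>Colorings c : [omega]^2 \<rightarrow> 2 are coded by c :: nat \<Rightarrow> nat \<Rightarrow> bool, where the
  colour of {m,n} with m < n is of_bool (c m n) (entries with m \<ge> n are ignored).\<close>

definition colour :: "(nat \<Rightarrow> nat \<Rightarrow> bool) \<Rightarrow> nat \<Rightarrow> nat \<Rightarrow> nat" where
  "colour c m n = (if m < n then of_bool (c m n) else of_bool (c n m))"

definition subadditive :: "(nat \<Rightarrow> nat \<Rightarrow> bool) \<Rightarrow> bool" where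
  "subadditive c \<longleftrightarrow> (\<forall>m n k. m < n \<and> n < k \<longrightarrow>
       colour c m n \<le> colour c m k + colour c n k)"

definition zero_homogeneous :: "(nat \<Rightarrow> nat \<Rightarrow> bool) \<Rightarrow> nat set \<Rightarrow> bool" where
  "zero_homogeneous c H \<longleftrightarrow> (\<forall>m\<in>H. \<forall>n\<in>H. m \<noteq> n \<longrightarrow> colour c m n = 0)"

definition nowhere_zero_homogeneous ::
    "nat set set \<Rightarrow> (nat \<Rightarrow> nat \<Rightarrow> bool) \<Rightarrow> nat set \<Rightarrow> bool" where
  "nowhere_zero_homogeneous I c H \<longleftrightarrow>
     (\<forall>B. B \<subseteq> H \<and> B \<notin> I \<longrightarrow> (\<exists>m\<in>B. \<exists>n\<in>B. m \<noteq> n \<and> colour c m n = 1))"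

definition uniformly_weakly_Ramsey :: "nat set set \<Rightarrow> bool" where
  "uniformly_weakly_Ramsey I \<longleftrightarrow>
     (\<exists>\<Phi> :: (nat \<Rightarrow> bool) \<times> (nat \<Rightarrow> nat \<Rightarrow> bool) \<Rightarrow> (nat \<Rightarrow> bool).
        \<Phi> \<in> restrict_space borel ({x. infinite (set_of x)} \<times> UNIV) \<rightarrow>\<^sub>M borel \<and>
        (\<forall>x c. infinite (set_of x) \<longrightarrow> infinite (set_of (\<Phi> (x, c)))) \<and>
        (\<forall>A c. A \<notin> I \<and> subadditive c \<longrightarrow>
            set_of (\<Phi> (chi A, c)) \<subseteq> A \<and> set_of (\<Phi> (chi A, c)) \<notin> I \<and>
            (zero_homogeneous c (set_of (\<Phi> (chi A, c))) \<or>
             nowhere_zero_homogeneous I c (set_of (\<Phi> (chi A, c))))))"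

end

theory Submission
  imports Defs
begin

text \<open>
  Refine \<open>A\<close> along \<open>\<omega>\<close>: at step \<open>n\<close> keep an \<open>I\<close>-positive one of the two parts of
  \<open>C\<^sub>n\<close> inside and outside the 0-neighbourhood \<open>G\<^sub>n = {k > n. c(n,k) = 0}\<close>.
  The uniform weak \<open>P\<^sup>+\<close> map turns this decreasing sequence into a positive \<open>X \<subseteq> A\<close>
  that is \<open>I\<close>-almost contained in or \<open>I\<close>-almost disjoint from every \<open>G\<^sub>k\<close>.
  Let \<open>S\<close> be the set of \<open>k \<in> X\<close> with \<open>X \<subseteq>\<^sub>I G\<^sub>k\<close>. Any two members of \<open>S\<close> have a
  common 0-neighbour above them, so by subadditivity \<open>S\<close> is 0-homogeneous. If \<open>S \<in> I\<close>,
  then \<open>X - S\<close> is positive and every \<open>k \<in> X - S\<close> has \<open>X \<inter> G\<^sub>k \<in> I\<close>; a positive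
  0-homogeneous \<open>B \<subseteq> X - S\<close> with least element \<open>m\<close> would lie in the small set
  \<open>{m} \<union> G\<^sub>m\<close>. Every step is a Borel operation on characteristic functions because
  \<open>I\<close> is Borel.
\<close>

instance bool :: second_countable_topology
proof
  show "\<exists>B::bool set set. countable B \<and> open = generate_topology B"
    by (intro exI[of _ UNIV]) (auto intro!: ext generate_topology.Basis simp: open_discrete)
qed

lemma measurable_bool_borel_iff_pred:
  "(f :: 'a \<Rightarrow> bool) \<in> M \<rightarrow>\<^sub>M borel \<longleftrightarrow> Measurable.pred M f"
proof -
  have "M \<rightarrow>\<^sub>M (borel :: bool measure) = M \<rightarrow>\<^sub>M count_space UNIV"
    by (rule measurable_cong_sets) (simp_all add: sets_borel_eq_count_space)
  then show ?thesis by simp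
qed

lemma set_of_chi [simp]: "set_of (chi A) = A"
  and chi_set_of [simp]: "chi (set_of x) = x"
  by (auto simp: set_of_def chi_def)

lemma measurable_chi_iff:
  "(\<lambda>w. chi (F w)) \<in> borel_measurable M \<longleftrightarrow> (\<forall>k. Measurable.pred M (\<lambda>w. k \<in> F w))"
proof
  assume "(\<lambda>w. chi (F w)) \<in> borel_measurable M"
  from measurable_product_then_coordinatewise[OF this]
  show "\<forall>k. Measurable.pred M (\<lambda>w. k \<in> F w)"
    unfolding measurable_bool_borel_iff_pred chi_def by blast
next
  assume "\<forall>k. Measurable.pred M (\<lambda>w. k \<in> F w)"
  then show "(\<lambda>w. chi (F w)) \<in> borel_measurable M"
    unfolding chi_def
    by (intro measurable_coordinatewise_then_product) (simp only: measurable_bool_borel_iff_pred)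
qed

lemma pred_coloring_entry:
  assumes "(c :: 'a \<Rightarrow> nat \<Rightarrow> nat \<Rightarrow> bool) \<in> borel_measurable M"
  shows "Measurable.pred M (\<lambda>w. c w m n)"
  using measurable_product_then_coordinatewise[OF measurable_product_then_coordinatewise[OF assms]]
  by (simp add: measurable_bool_borel_iff_pred)

lemma pred_in_ideal:
  assumes "chi ` I \<in> sets borel" and "\<And>k. Measurable.pred M (\<lambda>w. k \<in> F w)"
  shows "Measurable.pred M (\<lambda>w. F w \<in> I)"
proof -
  have "Measurable.pred M (\<lambda>w. chi (F w) \<in> chi ` I)"
    using assms by (intro pred_sets2) (auto simp: measurable_chi_iff)
  moreover have "chi (F w) \<in> chi ` I \<longleftrightarrow> F w \<in> I" for w
    by (metis image_iff set_of_chi)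
  ultimately show ?thesis by simp
qed

lemma pred_infinite:
  fixes F :: "'a \<Rightarrow> nat set"
  assumes [measurable]: "\<And>k. Measurable.pred M (\<lambda>w. k \<in> F w)"
  shows "Measurable.pred M (\<lambda>w. infinite (F w))"
proof -
  have "Measurable.pred M (\<lambda>w. \<forall>n. \<exists>k. n < k \<and> k \<in> F w)" by measurable
  then show ?thesis by (simp add: infinite_nat_iff_unbounded)
qed

lemma ideal_subset: "is_ideal I \<Longrightarrow> B \<in> I \<Longrightarrow> A \<subseteq> B \<Longrightarrow> A \<in> I"
  unfolding is_ideal_def by blast

lemma ideal_Un: "is_ideal I \<Longrightarrow> A \<in> I \<Longrightarrow> B \<in> I \<Longrightarrow> A \<union> B \<in> I"
  unfolding is_ideal_def by blast

lemma not_in_ideal_Diff_or_Int: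
  assumes "is_ideal I" and "X \<notin> I"
  shows "X - G \<notin> I \<or> X \<inter> G \<notin> I"
  using ideal_Un[OF assms(1), of "X - G" "X \<inter> G"] assms(2) by (metis Un_Diff_Int)

lemma finite_in_ideal: "fin_in I \<Longrightarrow> finite A \<Longrightarrow> A \<in> I"
  unfolding fin_in_def by blast

definition zero_above :: "(nat \<Rightarrow> nat \<Rightarrow> bool) \<Rightarrow> nat \<Rightarrow> nat set" where
  "zero_above c n = {k. n < k \<and> \<not> c n k}"

lemma colour_commute: "colour c m n = colour c n m"
  unfolding colour_def by auto

lemma colour_eq_0_or_1: "colour c m n = 0 \<or> colour c m n = 1"
  unfolding colour_def by simp

lemma in_zero_above_iff: "k \<in> zero_above c n \<longleftrightarrow> n < k \<and> colour c n k = 0"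
  unfolding zero_above_def colour_def by auto

lemma zero_homogeneous_if_almost_in_zero_above:
  assumes I: "is_ideal I" and sub: "subadditive c" and "X \<notin> I"
    and S: "\<And>k. k \<in> S \<Longrightarrow> X - zero_above c k \<in> I"
  shows "zero_homogeneous c S"
proof -
  have "colour c m n = 0" if "m \<in> S" "n \<in> S" "m < n" for m n
  proof -
    have "X \<inter> zero_above c m \<inter> zero_above c n \<noteq> {}"
    proof
      assume "X \<inter> zero_above c m \<inter> zero_above c n = {}"
      then have "X \<subseteq> (X - zero_above c m) \<union> (X - zero_above c n)" by blast
      moreover have "(X - zero_above c m) \<union> (X - zero_above c n) \<in> I"
        using that S ideal_Un[OF I] by blast
      ultimately show False
        using \<open>X \<notin> I\<close> ideal_subset[OF I] by blast
    qed
    then obtain k where k: "n < k" "colour c m k = 0" "colour c n k = 0"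
      by (auto simp: in_zero_above_iff)
    have "colour c m n \<le> colour c m k + colour c n k"
      using sub \<open>m < n\<close> k(1) unfolding subadditive_def by blast
    with k show ?thesis by simp
  qed
  then show ?thesis
    unfolding zero_homogeneous_def
    by (metis colour_commute linorder_neqE_nat)
qed

lemma nowhere_zero_homogeneous_if_small_zero_above:
  assumes I: "is_ideal I" and fin: "fin_in I"
    and Y: "\<And>k. k \<in> Y \<Longrightarrow> Y \<inter> zero_above c k \<in> I"
  shows "nowhere_zero_homogeneous I c Y"
  unfolding nowhere_zero_homogeneous_def
proof (intro allI impI)
  fix B assume B: "B \<subseteq> Y \<and> B \<notin> I"
  show "\<exists>m\<in>B. \<exists>n\<in>B. m \<noteq> n \<and> colour c m n = 1"
  proof (rule ccontr)
    assume "\<not> ?thesis"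
    then have zero: "colour c m n = 0" if "m \<in> B" "n \<in> B" "m \<noteq> n" for m n
      using that colour_eq_0_or_1 by blast
    have "B \<noteq> {}"
      using B finite_in_ideal[OF fin, of "{}"] by blast
    define h where "h = (LEAST h. h \<in> B)"
    have h: "h \<in> B" "\<And>n. n \<in> B \<Longrightarrow> h \<le> n"
      unfolding h_def using \<open>B \<noteq> {}\<close> by (auto intro: LeastI Least_le)
    have "B \<subseteq> {h} \<union> (Y \<inter> zero_above c h)"
    proof
      fix n assume "n \<in> B"
      with h(1) h(2)[OF \<open>n \<in> B\<close>] zero[of h n] B show "n \<in> {h} \<union> (Y \<inter> zero_above c h)"
        by (cases "n = h") (auto simp: in_zero_above_iff)
    qed
    moreover have "{h} \<union> (Y \<inter> zero_above c h) \<in> I"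
      using ideal_Un[OF I finite_in_ideal[OF fin] Y] h(1) B by blast
    ultimately show False
      using B ideal_subset[OF I] by blast
  qed
qed

primrec refining_seq :: "nat set set \<Rightarrow> nat set \<Rightarrow> (nat \<Rightarrow> nat \<Rightarrow> bool) \<Rightarrow> nat \<Rightarrow> nat set"
  where
    "refining_seq I A c 0 = A"
  | "refining_seq I A c (Suc n) =
      (if refining_seq I A c n \<inter> zero_above c n \<notin> I
       then refining_seq I A c n \<inter> zero_above c n
       else refining_seq I A c n - zero_above c n)"

lemma refining_seq_Suc_subset: "refining_seq I A c (Suc n) \<subseteq> refining_seq I A c n"
  by auto

lemma refining_seq_not_in_ideal:
  assumes "is_ideal I" and "A \<notin> I"
  shows "refining_seq I A c n \<notin> I"
  by (induction n) (use assms not_in_ideal_Diff_or_Int in auto)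

lemma refining_seq_Suc_decides:
  "refining_seq I A c (Suc n) \<subseteq> zero_above c n \<or> refining_seq I A c (Suc n) \<inter> zero_above c n = {}"
  by auto

lemma almost_decides_zero_above:
  assumes I: "is_ideal I" and X: "\<And>n. X - refining_seq I A c n \<in> I"
  shows "X - zero_above c k \<in> I \<or> X \<inter> zero_above c k \<in> I"
proof -
  let ?C = "refining_seq I A c (Suc k)"
  from refining_seq_Suc_decides
  have "X - zero_above c k \<subseteq> X - ?C \<or> X \<inter> zero_above c k \<subseteq> X - ?C"
    by blast
  then show ?thesis
    using X[of "Suc k"] ideal_subset[OF I] by blast
qed

definition ramsey_candidate :: "nat set set \<Rightarrow> nat set \<Rightarrow> (nat \<Rightarrow> nat \<Rightarrow> bool) \<Rightarrow> nat set"
  where "ramsey_candidate I X c =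
    (let S = {k \<in> X. X - zero_above c k \<in> I} in if S \<notin> I then S else X - S)"

lemma ramsey_candidate:
  assumes I: "is_ideal I" and fin: "fin_in I" and sub: "subadditive c" and X: "X \<notin> I"
    and decides: "\<And>k. X - zero_above c k \<in> I \<or> X \<inter> zero_above c k \<in> I"
  shows "ramsey_candidate I X c \<subseteq> X \<and> ramsey_candidate I X c \<notin> I \<and>
    (zero_homogeneous c (ramsey_candidate I X c) \<or>
      nowhere_zero_homogeneous I c (ramsey_candidate I X c))"
proof -
  define S where "S = {k \<in> X. X - zero_above c k \<in> I}"
  show ?thesis
  proof (cases "S \<in> I")
    case False
    have "zero_homogeneous c S"
      by (rule zero_homogeneous_if_almost_in_zero_above[OF I sub X]) (simp add: S_def)
    with False show ?thesis
      by (simp add: ramsey_candidate_def S_def[symmetric]) (auto simp: S_def)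
  next
    case True
    have "X - S \<notin> I"
      using not_in_ideal_Diff_or_Int[OF I X, of S] True ideal_subset[OF I] by blast
    moreover have "(X - S) \<inter> zero_above c k \<in> I" if "k \<in> X - S" for k
    proof -
      have "X \<inter> zero_above c k \<in> I"
        using decides[of k] that by (auto simp: S_def)
      then show ?thesis
        by (rule ideal_subset[OF I]) blast
    qed
    ultimately show ?thesis
      using True nowhere_zero_homogeneous_if_small_zero_above[OF I fin]
      by (simp add: ramsey_candidate_def S_def[symmetric]) blast
  qed
qed

text \<open>The fallback \<open>A\<close> is never used for \<open>I\<close>-positive \<open>A\<close>; it makes the selector map
  every infinite set to an infinite set, as its domain of definition requires.\<close>

definition ramsey_selector ::
    "((nat \<Rightarrow> nat \<Rightarrow> bool) \<Rightarrow> (nat \<Rightarrow> bool)) \<Rightarrow> nat set set \<Rightarrow>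
      nat set \<Rightarrow> (nat \<Rightarrow> nat \<Rightarrow> bool) \<Rightarrow> nat set"
  where "ramsey_selector P I A c =
    (let X = set_of (P (\<lambda>n. chi (refining_seq I A c n))) \<inter> A;
         R = ramsey_candidate I X c
     in if infinite R then R else A)"

lemma infinite_ramsey_selector: "infinite A \<Longrightarrow> infinite (ramsey_selector P I A c)"
  by (simp add: ramsey_selector_def Let_def)

lemma ramsey_selector:
  assumes I: "is_ideal I" and fin: "fin_in I" and sub: "subadditive c" and A: "A \<notin> I"
    and P_pos: "set_of (P (\<lambda>n. chi (refining_seq I A c n))) \<notin> I"
    and P_sub: "\<And>n. subset_mod I (set_of (P (\<lambda>n. chi (refining_seq I A c n)))) (refining_seq I A c n)"
  shows "ramsey_selector P I A c \<subseteq> A \<and> ramsey_selector P I A c \<notin> I \<and>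
    (zero_homogeneous c (ramsey_selector P I A c) \<or>
      nowhere_zero_homogeneous I c (ramsey_selector P I A c))"
proof -
  define Y where "Y = set_of (P (\<lambda>n. chi (refining_seq I A c n)))"
  define X where "X = Y \<inter> A"
  have small: "Y - refining_seq I A c n \<in> I" for n
    using P_sub unfolding Y_def subset_mod_def .
  have "X \<notin> I"
  proof
    assume "X \<in> I"
    then have "X \<union> (Y - refining_seq I A c 0) \<in> I"
      using ideal_Un[OF I] small by blast
    moreover have "Y \<subseteq> X \<union> (Y - refining_seq I A c 0)"
      by (auto simp: X_def)
    ultimately show False
      using P_pos ideal_subset[OF I] unfolding Y_def by blast
  qed
  moreover have "X - refining_seq I A c n \<in> I" for n
    by (rule ideal_subset[OF I small]) (auto simp: X_def)
  ultimately have R: "ramsey_candidate I X c \<subseteq> X \<and> ramsey_candidate I X c \<notin> I \<and>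
    (zero_homogeneous c (ramsey_candidate I X c) \<or>
      nowhere_zero_homogeneous I c (ramsey_candidate I X c))"
    using ramsey_candidate[OF I fin sub] almost_decides_zero_above[OF I] by blast
  then have "infinite (ramsey_candidate I X c)"
    using finite_in_ideal[OF fin] by blast
  then have "ramsey_selector P I A c = ramsey_candidate I X c"
    by (simp add: ramsey_selector_def X_def Y_def)
  with R show ?thesis
    by (auto simp: X_def)
qed

lemma measurable_ramsey_selector:
  assumes I: "chi ` I \<in> sets borel" and P: "P \<in> borel_measurable borel"
    and A: "(\<lambda>w. chi (A w)) \<in> borel_measurable M" and coloring: "c \<in> borel_measurable M"
  shows "(\<lambda>w. chi (ramsey_selector P I (A w) (c w))) \<in> borel_measurable M"
proof -
  have [measurable]: "Measurable.pred M (\<lambda>w. k \<in> A w)" for k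
    using A by (simp add: measurable_chi_iff)
  have [measurable]: "Measurable.pred M (\<lambda>w. c w m n)" for m n
    using coloring by (rule pred_coloring_entry)
  have [measurable]: "Measurable.pred M (\<lambda>w. k \<in> zero_above (c w) n)" for k n
    unfolding zero_above_def by simp
  have seq[measurable]: "Measurable.pred M (\<lambda>w. k \<in> refining_seq I (A w) (c w) n)" for k n
  proof (induction n arbitrary: k)
    case 0
    then show ?case by simp
  next
    case (Suc n)
    have [measurable]:
        "Measurable.pred M (\<lambda>w. refining_seq I (A w) (c w) n \<inter> zero_above (c w) n \<in> I)"
      using Suc by (intro pred_in_ideal[OF I]) simp
    show ?case
      using Suc by simp
  qed
  have "(\<lambda>w n. chi (refining_seq I (A w) (c w) n)) \<in> borel_measurable M"
    by (rule measurable_coordinatewise_then_product) (simp add: measurable_chi_iff seq)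
  then have "(\<lambda>w. chi (set_of (P (\<lambda>n. chi (refining_seq I (A w) (c w) n))))) \<in> borel_measurable M"
    using measurable_compose[OF _ P] by simp
  then have [measurable]:
      "Measurable.pred M (\<lambda>w. k \<in> set_of (P (\<lambda>n. chi (refining_seq I (A w) (c w) n))))" for k
    by (simp only: measurable_chi_iff)
  define X where "X w = set_of (P (\<lambda>n. chi (refining_seq I (A w) (c w) n))) \<inter> A w" for w
  have [measurable]: "Measurable.pred M (\<lambda>w. k \<in> X w)" for k
    unfolding X_def by simp
  have [measurable]: "Measurable.pred M (\<lambda>w. X w - zero_above (c w) k \<in> I)" for k
    by (intro pred_in_ideal[OF I]) simp
  define S where "S w = {k \<in> X w. X w - zero_above (c w) k \<in> I}" for w
  have [measurable]: "Measurable.pred M (\<lambda>w. k \<in> S w)" for k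
    unfolding S_def by simp
  have [measurable]: "Measurable.pred M (\<lambda>w. S w \<in> I)"
    by (intro pred_in_ideal[OF I]) simp
  define R where "R w = ramsey_candidate I (X w) (c w)" for w
  have [measurable]: "Measurable.pred M (\<lambda>w. k \<in> R w)" for k
    unfolding R_def ramsey_candidate_def S_def[symmetric] Let_def by simp
  have [measurable]: "Measurable.pred M (\<lambda>w. infinite (R w))"
    by (intro pred_infinite) simp
  have "Measurable.pred M (\<lambda>w. k \<in> ramsey_selector P I (A w) (c w))" for k
    unfolding ramsey_selector_def X_def[symmetric] R_def[symmetric] Let_def by simp
  then show ?thesis
    by (simp add: measurable_chi_iff)
qed

theorem lemma5p2:
  fixes I :: "nat set set"
  assumes "borel_ideal I"
    and "fin_in I"
    and "uniformly_weakly_Pplus I"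
  shows "uniformly_weakly_Ramsey I"
proof -
  have I: "is_ideal I" and I_borel: "chi ` I \<in> sets borel"
    using assms(1) by (auto simp: borel_ideal_def)
  obtain P where P_borel: "P \<in> borel_measurable borel" and P_Pplus:
    "\<And>A. (\<forall>n. A n \<notin> I) \<and> (\<forall>n. A (Suc n) \<subseteq> A n) \<Longrightarrow>
      set_of (P (\<lambda>n. chi (A n))) \<notin> I \<and> (\<forall>n. subset_mod I (set_of (P (\<lambda>n. chi (A n)))) (A n))"
    using assms(3) unfolding uniformly_weakly_Pplus_def by blast
  define \<Phi> where "\<Phi> w = chi (ramsey_selector P I (set_of (fst w)) (snd w))" for w
  have "\<Phi> \<in> borel_measurable borel"
    unfolding \<Phi>_def
    by (intro measurable_ramsey_selector[OF I_borel P_borel])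
      (simp_all add: borel_measurable_continuous_onI continuous_on_fst continuous_on_snd)
  then have "\<Phi> \<in> restrict_space borel ({x. infinite (set_of x)} \<times> UNIV) \<rightarrow>\<^sub>M borel"
    by (rule measurable_restrict_space1)
  moreover have "infinite (set_of (\<Phi> (x, c)))" if "infinite (set_of x)" for x c
    using that by (simp add: \<Phi>_def infinite_ramsey_selector)
  moreover have "set_of (\<Phi> (chi A, c)) \<subseteq> A \<and> set_of (\<Phi> (chi A, c)) \<notin> I \<and>
      (zero_homogeneous c (set_of (\<Phi> (chi A, c))) \<or>
       nowhere_zero_homogeneous I c (set_of (\<Phi> (chi A, c))))"
    if "A \<notin> I" and "subadditive c" for A c
    using ramsey_selector[OF I assms(2) \<open>subadditive c\<close> \<open>A \<notin> I\<close>]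
      P_Pplus[of "refining_seq I A c"] refining_seq_not_in_ideal[OF I \<open>A \<notin> I\<close>]
      refining_seq_Suc_subset
    by (simp add: \<Phi>_def)
  ultimately show ?thesis
    unfolding uniformly_weakly_Ramsey_def by blast
qed

end
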